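(* Let $(\Lambda W,d)$ be a Sullivan algebra over $\mathbb{Q}$ with $W$ concentrated in odd degrees. Suppose $W$ admits a basis $w_1,\ldots,w_n$ such that for every $1\leq i\leq n$ the element $d w_i$ is a monomial in the $w_j$, i.e. a scalar multiple (possibly zero) of a product $w_{j_1}w_{j_2}\cdots w_{j_m}$ of basis elements. Then $(\Lambda W,d)$ satisfies the Hilali conjecture, i.e. $$\dim H(\Lambda W,d)\geq \dim W.$$
   Context: $\Lambda W$ denotes the free graded-commutative algebra on the graded vector space $W$; a Sullivan algebra is such an algebra with a differential $d$ of degree $+1$ satisfying the usual Sullivan (nilpotence/filtration) condition. *)

theory Defs
  imports Complex_Main "HOL-Library.Function_Algebras"
begin

text \<open>Model of the free graded-commutative algebra on a graded rational vector space W
concentrated in odd degrees, with homogeneous basis w_0,...,w_(n-1).  Since all generators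
are odd, this algebra is the exterior algebra on the w_i.  An element is a function
from finite sets S of indices to coefficients: x S is the coefficient of the basis
monomial e_S = w_(s1) w_(s2) ... w_(sk), s1 < s2 < ... < sk.\<close>

type_synonym ext = "nat set \<Rightarrow> rat"

definition ext_carrier :: "nat \<Rightarrow> ext set" where
  "ext_carrier n = {x. \<forall>S. x S \<noteq> 0 \<longrightarrow> S \<subseteq> {..<n}}"

definition ext_scale :: "rat \<Rightarrow> ext \<Rightarrow> ext" where
  "ext_scale c x = (\<lambda>S. c * x S)"

definition ext_mon :: "nat set \<Rightarrow> ext" where
  "ext_mon J = (\<lambda>S. if S = J then 1 else 0)"

definition ext_gen :: "nat \<Rightarrow> ext" where
  "ext_gen i = ext_mon {i}"

text \<open>Koszul sign: e_T * e_U = ext_sign T U * e_(T Un U) for disjoint T, U.\<close>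
definition ext_sign :: "nat set \<Rightarrow> nat set \<Rightarrow> rat" where
  "ext_sign T U = (-1) ^ card {(i, j). i \<in> T \<and> j \<in> U \<and> j < i}"

definition ext_mult :: "ext \<Rightarrow> ext \<Rightarrow> ext" where
  "ext_mult x y = (\<lambda>S. \<Sum>T\<in>Pow S. x T * y (S - T) * ext_sign T (S - T))"

definition mon_degree :: "(nat \<Rightarrow> nat) \<Rightarrow> nat set \<Rightarrow> nat" where
  "mon_degree deg S = (\<Sum>i\<in>S. deg i)"

definition homogeneous :: "(nat \<Rightarrow> nat) \<Rightarrow> nat \<Rightarrow> ext \<Rightarrow> bool" where
  "homogeneous deg p x \<longleftrightarrow> (\<forall>S. x S \<noteq> 0 \<longrightarrow> mon_degree deg S = p)"

definition gen_space :: "nat \<Rightarrow> ext set" where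
  "gen_space n = {x. \<forall>S. x S \<noteq> 0 \<longrightarrow> (\<exists>i<n. S = {i})}"

definition is_subspace :: "ext set \<Rightarrow> bool" where
  "is_subspace V \<longleftrightarrow> 0 \<in> V \<and> (\<forall>x\<in>V. \<forall>y\<in>V. x + y \<in> V) \<and> (\<forall>c. \<forall>x\<in>V. ext_scale c x \<in> V)"

inductive_set subalg :: "ext set \<Rightarrow> ext set" for V where
  sub_one: "ext_mon {} \<in> subalg V"
| sub_gen: "v \<in> V \<Longrightarrow> v \<in> subalg V"
| sub_add: "x \<in> subalg V \<Longrightarrow> y \<in> subalg V \<Longrightarrow> x + y \<in> subalg V"
| sub_scale: "x \<in> subalg V \<Longrightarrow> ext_scale c x \<in> subalg V"
| sub_mult: "x \<in> subalg V \<Longrightarrow> y \<in> subalg V \<Longrightarrow> ext_mult x y \<in> subalg V"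

definition sullivan_algebra :: "nat \<Rightarrow> (nat \<Rightarrow> nat) \<Rightarrow> (ext \<Rightarrow> ext) \<Rightarrow> bool" where
  "sullivan_algebra n deg d \<longleftrightarrow>
     (\<forall>i<n. deg i \<ge> 1)
   \<and> (\<forall>x\<in>ext_carrier n. d x \<in> ext_carrier n)
   \<and> (\<forall>x\<in>ext_carrier n. \<forall>y\<in>ext_carrier n. d (x + y) = d x + d y)
   \<and> (\<forall>c. \<forall>x\<in>ext_carrier n. d (ext_scale c x) = ext_scale c (d x))
   \<and> (\<forall>p x. x \<in> ext_carrier n \<longrightarrow> homogeneous deg p x \<longrightarrow> homogeneous deg (p + 1) (d x))
   \<and> (\<forall>p x y. x \<in> ext_carrier n \<longrightarrow> y \<in> ext_carrier n \<longrightarrow> homogeneous deg p x \<longrightarrow>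
        d (ext_mult x y) = ext_mult (d x) y + ext_scale ((-1) ^ p) (ext_mult x (d y)))
   \<and> (\<forall>x\<in>ext_carrier n. d (d x) = 0)
   \<and> (\<exists>Wf :: nat \<Rightarrow> ext set.
        (\<forall>k. is_subspace (Wf k) \<and> Wf k \<subseteq> gen_space n \<and> Wf k \<subseteq> Wf (Suc k))
      \<and> (\<Union>k. Wf k) = gen_space n
      \<and> (\<forall>x\<in>Wf 0. d x = 0)
      \<and> (\<forall>k. \<forall>x\<in>Wf (Suc k). d x \<in> subalg (Wf k)))"

definition rat_vdim :: "ext set \<Rightarrow> nat" where
  "rat_vdim V = vector_space.dim ext_scale V"

definition cohom_dim :: "nat \<Rightarrow> (ext \<Rightarrow> ext) \<Rightarrow> nat" where
  "cohom_dim n d = rat_vdim {x \<in> ext_carrier n. d x = 0} - rat_vdim (d ` ext_carrier n)"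

end

theory Submission
  imports Defs "HOL-Computational_Algebra.Polynomial"
begin

text \<open>Since all generators are odd, \<open>\<Lambda>W\<close> is the exterior algebra on \<open>w\<^sub>1, \<dots>, w\<^sub>n\<close>, with the
  monomials \<open>w\<^sub>S\<close> as a basis.  The Sullivan condition makes the relation "\<open>w\<^sub>j\<close> is a factor
  of \<open>d w\<^sub>i \<noteq> 0\<close>" well founded, so there are positive integer weights with
  \<open>\<nu> i = \<Sum>j\<in>J i. \<nu> j\<close> whenever \<open>d w\<^sub>i \<noteq> 0\<close>.  Then d maps a monomial of weight m into the
  span of the monomials of weight m and of opposite length parity.  If \<open>a\<^sub>m\<close> and \<open>b\<^sub>m\<close> count
  the even and odd subsets of weight m, the rank of d is at most \<open>\<Sum>\<^sub>m min a\<^sub>m b\<^sub>m\<close>, so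
  \<open>dim H = 2\<^sup>n - 2 rank d \<ge> \<Sum>\<^sub>m |a\<^sub>m - b\<^sub>m|\<close>.  The right-hand side bounds the number of
  nonzero coefficients of \<open>\<Prod>\<^sub>i (1 - x\<^bsup>\<nu> i\<^esup>) = \<Sum>\<^sub>m (a\<^sub>m - b\<^sub>m) x\<^sup>m\<close>, and a nonzero polynomial
  vanishing to order n at 1 has more than n nonzero coefficients.\<close>

section \<open>Products and signs in the exterior algebra\<close>

interpretation ext_vs: vector_space ext_scale
  by unfold_locales (auto simp: ext_scale_def fun_eq_iff algebra_simps)

lemma ext_scale_apply: "ext_scale c x S = c * x S"
  by (simp add: ext_scale_def)

lemma sum_fun_apply: "(sum f A) x = (\<Sum>a\<in>A. f a x)"
  by (induction A rule: infinite_finite_induct) auto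

definition inversions :: "nat set \<Rightarrow> nat set \<Rightarrow> (nat \<times> nat) set" where
  "inversions T U = {(i, j). i \<in> T \<and> j \<in> U \<and> j < i}"

lemma ext_sign_inversions: "ext_sign T U = (-1) ^ card (inversions T U)"
  by (simp add: ext_sign_def inversions_def)

lemma finite_inversions: "finite T \<Longrightarrow> finite U \<Longrightarrow> finite (inversions T U)"
  by (rule finite_subset[of _ "T \<times> U"]) (auto simp: inversions_def)

lemma ext_sign_Un_left:
  assumes "finite A" "finite B" "finite U" "A \<inter> B = {}"
  shows "ext_sign (A \<union> B) U = ext_sign A U * ext_sign B U"
proof -
  have "inversions (A \<union> B) U = inversions A U \<union> inversions B U"
    "inversions A U \<inter> inversions B U = {}"
    using assms(4) by (auto simp: inversions_def)
  then show ?thesis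
    using assms by (simp add: ext_sign_inversions card_Un_disjoint finite_inversions power_add)
qed

lemma ext_sign_Un_right:
  assumes "finite A" "finite B" "finite T" "A \<inter> B = {}"
  shows "ext_sign T (A \<union> B) = ext_sign T A * ext_sign T B"
proof -
  have "inversions T (A \<union> B) = inversions T A \<union> inversions T B"
    "inversions T A \<inter> inversions T B = {}"
    using assms(4) by (auto simp: inversions_def)
  then show ?thesis
    using assms by (simp add: ext_sign_inversions card_Un_disjoint finite_inversions power_add)
qed

lemma ext_sign_square: "ext_sign T U * ext_sign T U = 1"
  by (simp add: ext_sign_def flip: power_mult_distrib)

lemma ext_sign_nonzero: "ext_sign T U \<noteq> 0"
  by (simp add: ext_sign_def)

lemma ext_sign_empty_left [simp]: "ext_sign {} U = 1"
  and ext_sign_empty_right [simp]: "ext_sign T {} = 1"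
  by (simp_all add: ext_sign_inversions inversions_def)

lemma ext_sign_singleton_swap:
  assumes "k \<noteq> l"
  shows "ext_sign {l} {k} * ext_sign {k} {l} = -1"
proof -
  have "inversions {l} {k} = (if k < l then {(l, k)} else {})"
    "inversions {k} {l} = (if l < k then {(k, l)} else {})"
    by (auto simp: inversions_def)
  then have "card (inversions {l} {k}) + card (inversions {k} {l}) = 1"
    using assms by auto
  then show ?thesis by (simp add: ext_sign_inversions flip: power_add)
qed

lemma ext_sign_insert_right:
  assumes "finite S" "k \<in> S"
  shows "ext_sign {l} S = ext_sign {l} (S - {k}) * ext_sign {l} {k}"
  using ext_sign_Un_right[of "S - {k}" "{k}" "{l}"] assms by (auto simp: insert_absorb)

lemma ext_mult_infinite: "infinite S \<Longrightarrow> ext_mult x y S = 0"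
  by (simp add: ext_mult_def)

lemma ext_mult_add_left: "ext_mult (x + x') y = ext_mult x y + ext_mult x' y"
  and ext_mult_scale_left: "ext_mult (ext_scale c x) y = ext_scale c (ext_mult x y)"
  by (simp_all add: ext_mult_def ext_scale_def fun_eq_iff algebra_simps sum.distrib
      sum_distrib_left)

lemma ext_mult_zero_right [simp]: "ext_mult x 0 = 0"
  by (simp add: ext_mult_def fun_eq_iff)

text \<open>Products vanish on infinite index sets (the defining sum runs over the infinite set
  \<open>Pow S\<close> and is 0), so the unit laws only hold for elements that do so as well.\<close>

definition finitary :: "ext \<Rightarrow> bool" where
  "finitary x \<longleftrightarrow> (\<forall>S. infinite S \<longrightarrow> x S = 0)"

lemma finitary_ext_mon: "finite J \<Longrightarrow> finitary (ext_mon J)"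
  by (auto simp: finitary_def ext_mon_def)

lemma finitary_carrier: "x \<in> ext_carrier n \<Longrightarrow> finitary x"
  by (auto simp: finitary_def ext_carrier_def intro: finite_subset)

lemma ext_mult_one_left:
  assumes "finitary y"
  shows "ext_mult (ext_mon {}) y = y"
proof
  fix S
  show "ext_mult (ext_mon {}) y S = y S"
  proof (cases "finite S")
    case True
    have "ext_mult (ext_mon {}) y S = (\<Sum>T\<in>Pow S. if T = {} then y S else 0)"
      unfolding ext_mult_def by (rule sum.cong) (auto simp: ext_mon_def)
    with True show ?thesis by simp
  qed (use assms in \<open>auto simp: finitary_def ext_mult_infinite\<close>)
qed

lemma ext_mult_one_right:
  assumes "finitary y"
  shows "ext_mult y (ext_mon {}) = y"
proof
  fix S
  show "ext_mult y (ext_mon {}) S = y S"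
  proof (cases "finite S")
    case True
    have "ext_mult y (ext_mon {}) S = (\<Sum>T\<in>Pow S. if T = S then y S else 0)"
      unfolding ext_mult_def by (rule sum.cong) (auto simp: ext_mon_def)
    with True show ?thesis by simp
  qed (use assms in \<open>auto simp: finitary_def ext_mult_infinite\<close>)
qed

text \<open>Both bracketings of a triple product expand to the same sum over ordered splittings
  S = T \<union> U \<union> (S - T - U).\<close>

definition triple_product :: "ext \<Rightarrow> ext \<Rightarrow> ext \<Rightarrow> nat set \<Rightarrow> rat" where
  "triple_product x y z S = (\<Sum>(T, U)\<in>(SIGMA T:Pow S. Pow (S - T)).
     x T * y U * z (S - T - U) * ext_sign T U * ext_sign T (S - T - U) * ext_sign U (S - T - U))"

lemma ext_mult_assoc_left_expand:
  assumes fin: "finite S"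
  shows "ext_mult (ext_mult x y) z S = triple_product x y z S"
proof -
  have "ext_mult (ext_mult x y) z S = (\<Sum>(R, T)\<in>(SIGMA R:Pow S. Pow R).
      x T * y (R - T) * ext_sign T (R - T) * z (S - R) * ext_sign R (S - R))"
    unfolding ext_mult_def using fin
    by (simp add: sum_distrib_right sum.Sigma finite_subset)
  also have "\<dots> = triple_product x y z S"
    unfolding triple_product_def
  proof (rule sum.reindex_bij_witness[where i = "\<lambda>(T, U). (T \<union> U, T)"
        and j = "\<lambda>(R, T). (T, R - T)"], goal_cases)
    case (5 a)
    then obtain R T where a: "a = (R, T)" "T \<subseteq> R" "R \<subseteq> S" by auto
    then have "ext_sign R (S - R) = ext_sign T (S - R) * ext_sign (R - T) (S - R)"
      using ext_sign_Un_left[of T "R - T" "S - R"] fin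
      by (auto simp: Un_absorb1 Un_Diff_cancel finite_subset)
    moreover have "S - T - (R - T) = S - R" using a by auto
    ultimately show ?case using a by (simp add: Un_absorb1 ac_simps)
  qed auto
  finally show ?thesis .
qed

lemma ext_mult_assoc_right_expand:
  assumes fin: "finite S"
  shows "ext_mult x (ext_mult y z) S = triple_product x y z S"
proof -
  have "ext_mult x (ext_mult y z) S = (\<Sum>(T, U)\<in>(SIGMA T:Pow S. Pow (S - T)).
      x T * (y U * z (S - T - U) * ext_sign U (S - T - U)) * ext_sign T (S - T))"
    unfolding ext_mult_def using fin
    by (simp add: sum_distrib_left sum_distrib_right sum.Sigma Diff_Un ac_simps set_diff_eq)
  also have "\<dots> = triple_product x y z S"
    unfolding triple_product_def
  proof (rule sum.cong[OF refl], clarify)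
    fix T U assume tu: "T \<subseteq> S" "U \<subseteq> S - T"
    have "ext_sign T (S - T) = ext_sign T U * ext_sign T (S - T - U)"
      using ext_sign_Un_right[of U "S - T - U" T] tu fin
      by (auto intro: finite_subset simp: Un_Diff_cancel Un_absorb1 Diff_partition)
    then show "x T * (y U * z (S - T - U) * ext_sign U (S - T - U)) * ext_sign T (S - T) =
        x T * y U * z (S - T - U) * ext_sign T U * ext_sign T (S - T - U) * ext_sign U (S - T - U)"
      by (simp add: ac_simps)
  qed
  finally show ?thesis .
qed

lemma ext_mult_assoc: "ext_mult (ext_mult x y) z = ext_mult x (ext_mult y z)"
proof
  fix S
  show "ext_mult (ext_mult x y) z S = ext_mult x (ext_mult y z) S"
    by (cases "finite S")
      (simp_all add: ext_mult_infinite ext_mult_assoc_left_expand ext_mult_assoc_right_expand)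
qed

lemma ext_mult_gen_space:
  assumes v: "v \<in> gen_space n" and fin: "finite S"
  shows "ext_mult v z S = (\<Sum>k\<in>S. v {k} * z (S - {k}) * ext_sign {k} (S - {k}))"
proof -
  have "ext_mult v z S = (\<Sum>T\<in>(\<lambda>k. {k}) ` S. v T * z (S - T) * ext_sign T (S - T))"
    unfolding ext_mult_def
    by (rule sum.mono_neutral_right) (use fin v in \<open>auto simp: gen_space_def\<close>)
  also have "\<dots> = (\<Sum>k\<in>S. v {k} * z (S - {k}) * ext_sign {k} (S - {k}))"
    by (subst sum.reindex) (auto simp: inj_on_def)
  finally show ?thesis .
qed

lemma ext_mult_gen_mon:
  assumes fin: "finite S" and less: "\<forall>s\<in>S. i < s"
  shows "ext_mult (ext_gen i) (ext_mon S) = ext_mon (insert i S)"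
proof
  fix U
  show "ext_mult (ext_gen i) (ext_mon S) U = ext_mon (insert i S) U"
  proof (cases "finite U")
    case False
    then show ?thesis using fin by (auto simp: ext_mult_infinite ext_mon_def)
  next
    case True
    have "ext_gen i \<in> gen_space (Suc i)"
      by (auto simp: gen_space_def ext_gen_def ext_mon_def)
    then have "ext_mult (ext_gen i) (ext_mon S) U =
        (\<Sum>k\<in>U. ext_gen i {k} * ext_mon S (U - {k}) * ext_sign {k} (U - {k}))"
      using True by (rule ext_mult_gen_space)
    also have "\<dots> =
        (\<Sum>k\<in>U. if k = i then ext_mon S (U - {i}) * ext_sign {i} (U - {i}) else 0)"
      by (rule sum.cong) (auto simp: ext_gen_def ext_mon_def)
    also have "\<dots> = (if i \<in> U then ext_mon S (U - {i}) * ext_sign {i} (U - {i}) else 0)"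
      using True by simp
    also have "\<dots> = ext_mon (insert i S) U"
    proof -
      have "inversions {i} S = {}"
        using less by (auto simp: inversions_def)
      then have "ext_sign {i} S = 1"
        by (simp add: ext_sign_inversions)
      moreover have "i \<notin> S" using less by blast
      ultimately show ?thesis by (auto simp: ext_mon_def)
    qed
    finally show ?thesis .
  qed
qed

section \<open>Contraction with a linear functional on the generators\<close>

text \<open>A functional on W is given by its values \<open>\<phi> l\<close> on the basis; contraction with it is a
  graded derivation of degree -1, so it vanishes on the subalgebra generated by any
  subspace of W in its kernel.\<close>

definition pairing :: "nat \<Rightarrow> (nat \<Rightarrow> rat) \<Rightarrow> ext \<Rightarrow> rat" where
  "pairing n \<phi> v = (\<Sum>l<n. \<phi> l * v {l})"

definition contract :: "nat \<Rightarrow> (nat \<Rightarrow> rat) \<Rightarrow> ext \<Rightarrow> ext" where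
  "contract n \<phi> x = (\<lambda>S. \<Sum>l\<in>{..<n} - S. \<phi> l * ext_sign {l} S * x (insert l S))"

lemma contract_add: "contract n \<phi> (x + y) = contract n \<phi> x + contract n \<phi> y"
  and contract_scale: "contract n \<phi> (ext_scale c x) = ext_scale c (contract n \<phi> x)"
  and contract_one: "contract n \<phi> (ext_mon {}) = 0"
  by (simp_all add: contract_def ext_scale_def ext_mon_def fun_eq_iff algebra_simps
      sum.distrib sum_distrib_left)

lemma contract_ext_mult_gen_apply:
  assumes v: "v \<in> gen_space n" and fin: "finite S"
  shows "contract n \<phi> (ext_mult v z) S = (\<Sum>l\<in>{..<n} - S. \<phi> l * v {l} * z S)
    - (\<Sum>k\<in>S. \<Sum>l\<in>{..<n} - S. v {k} * \<phi> l * ext_sign {l} (S - {k}) * z (insert l (S - {k}))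
         * ext_sign {k} (S - {k}))"
proof -
  let ?L = "{..<n}"
  define A where "A l k = \<phi> l * ext_sign {l} S * (v {k} * z (insert l (S - {k}))
    * ext_sign {k} (insert l (S - {k})))" for l k
  have swap: "A l k = - (v {k} * \<phi> l * ext_sign {l} (S - {k}) * z (insert l (S - {k}))
      * ext_sign {k} (S - {k}))" if "l \<notin> S" "k \<in> S" for l k
  proof -
    have "insert l (S - {k}) = (S - {k}) \<union> {l}" by auto
    then have e1: "ext_sign {k} (insert l (S - {k})) = ext_sign {k} (S - {k}) * ext_sign {k} {l}"
      using ext_sign_Un_right[of "S - {k}" "{l}" "{k}"] fin that by auto
    have e2: "ext_sign {l} S = ext_sign {l} (S - {k}) * ext_sign {l} {k}"
      by (rule ext_sign_insert_right) (use fin that in auto)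
    have "A l k = (v {k} * \<phi> l * ext_sign {l} (S - {k}) * z (insert l (S - {k}))
        * ext_sign {k} (S - {k})) * (ext_sign {l} {k} * ext_sign {k} {l})"
      unfolding A_def e1 e2 by (simp add: ac_simps)
    also have "ext_sign {l} {k} * ext_sign {k} {l} = -1"
      by (rule ext_sign_singleton_swap) (use that in auto)
    finally show ?thesis by simp
  qed
  have "contract n \<phi> (ext_mult v z) S = (\<Sum>l\<in>?L - S. \<phi> l * ext_sign {l} S *
      (v {l} * z S * ext_sign {l} S
        + (\<Sum>k\<in>S. v {k} * z (insert l (S - {k})) * ext_sign {k} (insert l (S - {k})))))"
    unfolding contract_def
  proof (rule sum.cong[OF refl])
    fix l assume l: "l \<in> ?L - S"
    then have "insert l S - {l} = S" "\<And>k. k \<in> S \<Longrightarrow> insert l S - {k} = insert l (S - {k})"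
      by auto
    with l fin show "\<phi> l * ext_sign {l} S * ext_mult v z (insert l S) = \<phi> l * ext_sign {l} S *
      (v {l} * z S * ext_sign {l} S
        + (\<Sum>k\<in>S. v {k} * z (insert l (S - {k})) * ext_sign {k} (insert l (S - {k}))))"
      by (simp add: ext_mult_gen_space[OF v])
  qed
  also have "\<dots> = (\<Sum>l\<in>?L - S. \<phi> l * v {l} * z S) + (\<Sum>l\<in>?L - S. \<Sum>k\<in>S. A l k)"
    unfolding A_def
    by (simp add: sum.distrib sum_distrib_left algebra_simps ext_sign_square[unfolded mult.assoc])
  also have "(\<Sum>l\<in>?L - S. \<Sum>k\<in>S. A l k) = - (\<Sum>k\<in>S. \<Sum>l\<in>?L - S.
      v {k} * \<phi> l * ext_sign {l} (S - {k}) * z (insert l (S - {k})) * ext_sign {k} (S - {k}))"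
    by (subst sum.swap) (simp add: swap sum_negf)
  finally show ?thesis by simp
qed

lemma ext_mult_gen_contract_apply:
  assumes v: "v \<in> gen_space n" and fin: "finite S"
  shows "ext_mult v (contract n \<phi> z) S = (\<Sum>l\<in>{..<n} \<inter> S. \<phi> l * v {l} * z S)
    + (\<Sum>k\<in>S. \<Sum>l\<in>{..<n} - S. v {k} * \<phi> l * ext_sign {l} (S - {k}) * z (insert l (S - {k}))
         * ext_sign {k} (S - {k}))"
proof -
  let ?L = "{..<n}"
  have v_out: "v {k} = 0" if "k \<notin> ?L" for k
    using v that by (auto simp: gen_space_def)
  have "ext_mult v (contract n \<phi> z) S = (\<Sum>k\<in>S. \<phi> k * v {k} * z S + (\<Sum>l\<in>?L - S.
      v {k} * \<phi> l * ext_sign {l} (S - {k}) * z (insert l (S - {k})) * ext_sign {k} (S - {k})))"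
    unfolding ext_mult_gen_space[OF v fin]
  proof (rule sum.cong[OF refl])
    fix k assume k: "k \<in> S"
    show "v {k} * contract n \<phi> z (S - {k}) * ext_sign {k} (S - {k}) = \<phi> k * v {k} * z S
      + (\<Sum>l\<in>?L - S. v {k} * \<phi> l * ext_sign {l} (S - {k}) * z (insert l (S - {k}))
        * ext_sign {k} (S - {k}))"
    proof (cases "k \<in> ?L")
      case True
      with k have "?L - (S - {k}) = insert k (?L - S)" "insert k (S - {k}) = S" by auto
      then have "contract n \<phi> z (S - {k}) = \<phi> k * ext_sign {k} (S - {k}) * z S
          + (\<Sum>l\<in>?L - S. \<phi> l * ext_sign {l} (S - {k}) * z (insert l (S - {k})))"
        unfolding contract_def using k by simp
      then show ?thesis
        by (simp add: algebra_simps sum_distrib_left sum_distrib_right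
            ext_sign_square[unfolded mult.assoc])
    qed (simp add: v_out)
  qed
  also have "(\<Sum>k\<in>S. \<phi> k * v {k} * z S) = (\<Sum>l\<in>?L \<inter> S. \<phi> l * v {l} * z S)"
    by (rule sum.mono_neutral_right) (use fin v_out in auto)
  ultimately show ?thesis by (simp add: sum.distrib)
qed

lemma contract_ext_mult_gen:
  assumes v: "v \<in> gen_space n" and z: "finitary z"
  shows "contract n \<phi> (ext_mult v z) = ext_scale (pairing n \<phi> v) z - ext_mult v (contract n \<phi> z)"
proof
  fix S
  show "contract n \<phi> (ext_mult v z) S =
      (ext_scale (pairing n \<phi> v) z - ext_mult v (contract n \<phi> z)) S"
  proof (cases "finite S")
    case False
    then show ?thesis
      using z by (simp add: contract_def ext_mult_infinite finitary_def ext_scale_apply)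
  next
    case True
    have "pairing n \<phi> v * z S = (\<Sum>l\<in>({..<n} - S) \<union> ({..<n} \<inter> S). \<phi> l * v {l} * z S)"
      unfolding pairing_def sum_distrib_right by (rule sum.cong) auto
    also have "\<dots> = (\<Sum>l\<in>{..<n} - S. \<phi> l * v {l} * z S) + (\<Sum>l\<in>{..<n} \<inter> S. \<phi> l * v {l} * z S)"
      by (rule sum.union_disjoint) auto
    finally show ?thesis
      using contract_ext_mult_gen_apply[OF v True] ext_mult_gen_contract_apply[OF v True]
      by (simp add: ext_scale_apply)
  qed
qed

text \<open>\<open>\<Lambda>V\<close> is already generated by left multiplications with elements of V; this is the
  form in which induction over it works for contraction.\<close>

inductive_set subalg_left :: "ext set \<Rightarrow> ext set" for V where
  one: "ext_mon {} \<in> subalg_left V"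
| add: "x \<in> subalg_left V \<Longrightarrow> y \<in> subalg_left V \<Longrightarrow> x + y \<in> subalg_left V"
| scale: "x \<in> subalg_left V \<Longrightarrow> ext_scale c x \<in> subalg_left V"
| mult: "v \<in> V \<Longrightarrow> x \<in> subalg_left V \<Longrightarrow> ext_mult v x \<in> subalg_left V"

lemma finitary_subalg_left: "x \<in> subalg_left V \<Longrightarrow> finitary x"
  by (induction rule: subalg_left.induct)
    (auto simp: finitary_def finitary_ext_mon ext_mult_infinite ext_mon_def ext_scale_def)

lemma subalg_left_ext_mult:
  "x \<in> subalg_left V \<Longrightarrow> y \<in> subalg_left V \<Longrightarrow> ext_mult x y \<in> subalg_left V"
proof (induction rule: subalg_left.induct)
  case one
  then show ?case by (simp add: ext_mult_one_left finitary_subalg_left)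
next
  case (add x x')
  then show ?case by (metis ext_mult_add_left subalg_left.add)
next
  case (scale x c)
  then show ?case by (metis ext_mult_scale_left subalg_left.scale)
next
  case (mult v x)
  then show ?case by (simp add: ext_mult_assoc subalg_left.mult)
qed

lemma subalg_subset_subalg_left:
  assumes "V \<subseteq> gen_space n"
  shows "subalg V \<subseteq> subalg_left V"
proof
  fix x assume "x \<in> subalg V"
  then show "x \<in> subalg_left V"
  proof (induction rule: subalg.induct)
    case (sub_gen v)
    then have "ext_mult v (ext_mon {}) \<in> subalg_left V"
      by (intro subalg_left.mult subalg_left.one)
    moreover have "finitary v"
      using sub_gen assms by (force simp: gen_space_def finitary_def)
    ultimately show ?case by (simp add: ext_mult_one_right)
  next
    case (sub_add x y)
    then show ?case by (blast intro: subalg_left.add)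
  next
    case (sub_scale x c)
    then show ?case by (blast intro: subalg_left.scale)
  qed (auto intro: subalg_left.one subalg_left_ext_mult)
qed

lemma contract_subalg_eq_0:
  assumes "V \<subseteq> gen_space n" "\<forall>v\<in>V. pairing n \<phi> v = 0" "x \<in> subalg V"
  shows "contract n \<phi> x = 0"
proof -
  have "x \<in> subalg_left V" using assms(1,3) subalg_subset_subalg_left by blast
  then show ?thesis
  proof (induction rule: subalg_left.induct)
    case (mult v x)
    then have "pairing n \<phi> v = 0" "v \<in> gen_space n" using assms(1,2) by auto
    then have "contract n \<phi> (ext_mult v x) =
        ext_scale (pairing n \<phi> v) x - ext_mult v (contract n \<phi> x)"
      using contract_ext_mult_gen finitary_subalg_left[OF mult.hyps(2)] by blast
    also have "\<dots> = 0"
      unfolding mult.IH \<open>pairing n \<phi> v = 0\<close> by (simp add: ext_scale_def fun_eq_iff)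
    finally show ?case .
  next
    case (scale x c)
    then show ?case unfolding contract_scale by (simp add: ext_scale_def fun_eq_iff)
  next
    case (add x y)
    then show ?case unfolding contract_add by simp
  qed (rule contract_one)
qed

section \<open>Dimensions of finitely spanned sets\<close>

context vector_space
begin

lemma finite_basis_exists:
  assumes "A \<subseteq> span F" "finite F"
  obtains B where "B \<subseteq> A" "independent B" "A \<subseteq> span B" "card B = dim A" "finite B"
proof -
  obtain B where B: "B \<subseteq> A" "independent B" "A \<subseteq> span B" "card B = dim A"
    by (rule basis_exists)
  moreover have "finite B"
    using independent_span_bound[OF assms(2) B(2)] B(1) assms(1) by blast
  ultimately show ?thesis using that by blast
qed

lemma dim_mono_finite:
  assumes "A \<subseteq> span B" "B \<subseteq> span F" "finite F"
  shows "dim A \<le> dim B"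
proof -
  obtain C where C: "B \<subseteq> span C" "card C = dim B" "finite C"
    by (rule finite_basis_exists[OF assms(2,3)])
  have "A \<subseteq> span C"
    using assms(1) C(1) by (metis span_minimal subspace_span subset_trans)
  then have "dim A \<le> card C" using C(3) by (rule dim_le_card)
  then show ?thesis using C(2) by simp
qed

lemma dim_Un_le:
  assumes "A \<subseteq> span F" "B \<subseteq> span G" "finite F" "finite G"
  shows "dim (A \<union> B) \<le> dim A + dim B"
proof -
  obtain BA where BA: "A \<subseteq> span BA" "card BA = dim A" "finite BA"
    by (rule finite_basis_exists[OF assms(1,3)])
  obtain BB where BB: "B \<subseteq> span BB" "card BB = dim B" "finite BB"
    by (rule finite_basis_exists[OF assms(2,4)])
  have "A \<union> B \<subseteq> span (BA \<union> BB)"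
    using BA(1) BB(1) span_mono[of BA "BA \<union> BB"] span_mono[of BB "BA \<union> BB"] by blast
  then have "dim (A \<union> B) \<le> card (BA \<union> BB)"
    using BA(3) BB(3) by (intro dim_le_card) auto
  also have "\<dots> \<le> card BA + card BB" by (rule card_Un_le)
  finally show ?thesis using BA(2) BB(2) by simp
qed

lemma dim_UN_le:
  assumes "finite I" "\<And>i. i \<in> I \<Longrightarrow> A i \<subseteq> span F" "finite F"
  shows "dim (\<Union>i\<in>I. A i) \<le> (\<Sum>i\<in>I. dim (A i))"
  using assms(1,2)
proof (induction I rule: finite_induct)
  case (insert i I)
  have "dim (\<Union>i\<in>insert i I. A i) \<le> dim (A i) + dim (\<Union>i\<in>I. A i)"
    unfolding UN_insert by (rule dim_Un_le[OF _ _ assms(3) assms(3)]) (use insert.prems in auto)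
  also have "\<dots> \<le> dim (A i) + (\<Sum>i\<in>I. dim (A i))" using insert by simp
  finally show ?case using insert by simp
qed (use dim_eq_card_independent[OF independent_empty] in simp)

end

context vector_space_pair
begin

context
  fixes f :: "'b \<Rightarrow> 'c" and X :: "'b set"
  assumes f: "Vector_Spaces.linear s1 s2 f" and X: "finite X"
begin

lemma dim_image_plus_dim_kernel_le:
  "vs2.dim (f ` vs1.span X) + vs1.dim {x \<in> vs1.span X. f x = 0} \<le> vs1.dim (vs1.span X)"
proof -
  let ?S = "vs1.span X" and ?K = "{x \<in> vs1.span X. f x = 0}"
  obtain BK where BK: "BK \<subseteq> ?K" "vs1.independent BK" "card BK = vs1.dim ?K" "finite BK"
    by (rule vs1.finite_basis_exists[of ?K X]) (use X in auto)
  obtain C where C: "BK \<subseteq> C" "C \<subseteq> ?S" "vs1.independent C" "?S \<subseteq> vs1.span C"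
    by (rule vs1.maximal_independent_subset_extend[of BK ?S]) (use BK in auto)
  have card_C: "card C = vs1.dim ?S" using vs1.basis_card_eq_dim[OF C(2) C(4) C(3)] .
  have fin_C: "finite C" using vs1.independent_span_bound[OF X C(3)] C(2) by blast
  have "f ` ?S \<subseteq> vs2.span (f ` C)"
    using C(4) linear_span_image[OF f] by (metis image_mono)
  also have "\<dots> \<subseteq> vs2.span (f ` (C - BK))"
  proof -
    have "f ` C \<subseteq> insert 0 (f ` (C - BK))" using BK(1) by auto
    then show ?thesis by (metis vs2.span_insert_0 vs2.span_mono)
  qed
  finally have "vs2.dim (f ` ?S) \<le> card (f ` (C - BK))"
    by (rule vs2.dim_le_card) (use fin_C in simp)
  also have "\<dots> \<le> card C - card BK"
    using fin_C BK(4) C(1) card_image_le[of "C - BK" f] by (simp add: card_Diff_subset)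
  finally show ?thesis
    using card_C BK(3) card_mono[OF fin_C C(1)] by linarith
qed

lemma dim_image_plus_dim_kernel_ge:
  "vs1.dim (vs1.span X) \<le> vs2.dim (f ` vs1.span X) + vs1.dim {x \<in> vs1.span X. f x = 0}"
proof -
  let ?S = "vs1.span X" and ?K = "{x \<in> vs1.span X. f x = 0}"
  obtain BK where BK: "?K \<subseteq> vs1.span BK" "card BK = vs1.dim ?K" "finite BK"
    by (rule vs1.finite_basis_exists[of ?K X]) (use X in auto)
  have "f ` ?S \<subseteq> vs2.span (f ` X)" "finite (f ` X)"
    using linear_span_image[OF f] X by auto
  then obtain Y where Y: "Y \<subseteq> f ` ?S" "f ` ?S \<subseteq> vs2.span Y" "card Y = vs2.dim (f ` ?S)" "finite Y"
    by (rule vs2.finite_basis_exists)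
  have "\<forall>y\<in>Y. \<exists>s. s \<in> ?S \<and> f s = y" using Y(1) by blast
  then obtain g where g: "\<And>y. y \<in> Y \<Longrightarrow> g y \<in> ?S \<and> f (g y) = y" by metis
  have "?S \<subseteq> vs1.span (g ` Y \<union> BK)"
  proof
    fix s assume s: "s \<in> ?S"
    then obtain u where u: "f s = (\<Sum>y\<in>Y. s2 (u y) y)"
      using Y(2) vs2.span_finite[OF Y(4)] by blast
    define t where "t = (\<Sum>y\<in>Y. s1 (u y) (g y))"
    have "t \<in> ?S" unfolding t_def using g by (intro vs1.span_sum vs1.span_scale) auto
    moreover have "f t = f s"
      unfolding t_def u by (simp add: linear_sum[OF f] linear_scale[OF f] g)
    ultimately have "s - t \<in> vs1.span BK"
      using s BK(1) by (auto simp: vs1.span_diff linear_diff[OF f])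
    moreover have "t \<in> vs1.span (g ` Y)"
      unfolding t_def by (intro vs1.span_sum vs1.span_scale vs1.span_base) auto
    ultimately have "(s - t) + t \<in> vs1.span (g ` Y \<union> BK)"
      by (meson vs1.span_add vs1.span_mono subsetD sup_ge1 sup_ge2)
    then show "s \<in> vs1.span (g ` Y \<union> BK)" by simp
  qed
  then have "vs1.dim ?S \<le> card (g ` Y \<union> BK)"
    by (rule vs1.dim_le_card) (use Y(4) BK(3) in simp)
  also have "\<dots> \<le> card Y + card BK"
    using card_Un_le[of "g ` Y" BK] card_image_le[OF Y(4), of g] by linarith
  finally show ?thesis using Y(3) BK(2) by simp
qed

lemma rank_nullity_span:
  "vs2.dim (f ` vs1.span X) + vs1.dim {x \<in> vs1.span X. f x = 0} = vs1.dim (vs1.span X)"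
  using dim_image_plus_dim_kernel_le dim_image_plus_dim_kernel_ge by (rule antisym)

end

end

interpretation ext_to_rat: vector_space_pair ext_scale "(*) :: rat \<Rightarrow> rat \<Rightarrow> rat"
  by unfold_locales (auto simp: algebra_simps)

interpretation ext_to_ext: vector_space_pair ext_scale ext_scale
  by unfold_locales

section \<open>Monomials in subalgebras generated by subspaces of W\<close>

lemma gen_space_decomp:
  assumes "v \<in> gen_space n"
  shows "v = (\<Sum>l<n. ext_scale (v {l}) (ext_gen l))"
proof
  fix S
  have "(\<Sum>l<n. ext_scale (v {l}) (ext_gen l)) S = (\<Sum>l<n. if S = {l} then v {l} else 0)"
    by (simp add: sum_fun_apply ext_scale_apply ext_gen_def ext_mon_def) (rule sum.cong, auto)
  also have "\<dots> = v S"
  proof (cases "\<exists>i<n. S = {i}")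
    case True
    then obtain i where i: "i < n" "S = {i}" by blast
    then have "(\<Sum>l<n. if S = {l} then v {l} else 0) = (\<Sum>l<n. if l = i then v {i} else 0)"
      by (intro sum.cong) auto
    with i show ?thesis by simp
  next
    case False
    with assms show ?thesis by (auto simp: gen_space_def)
  qed
  finally show "v S = (\<Sum>l<n. ext_scale (v {l}) (ext_gen l)) S" by simp
qed

lemma separating_functional:
  assumes V: "is_subspace V" "V \<subseteq> gen_space n" and j: "ext_gen j \<notin> V"
  obtains \<phi> where "\<phi> j = 1" "\<forall>v\<in>V. pairing n \<phi> v = 0"
proof -
  obtain B where B: "B \<subseteq> V" "ext_vs.independent B" "V \<subseteq> ext_vs.span B"
    by (rule ext_vs.basis_exists)
  have "ext_vs.subspace V"
    using V(1) by (simp add: is_subspace_def ext_vs.subspace_def)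
  with B(1) have "ext_vs.span B \<subseteq> V" by (rule ext_vs.span_minimal)
  with j have indep: "ext_vs.independent (insert (ext_gen j) B)"
    using B(2) by (intro ext_vs.independent_insertI) auto
  define g where "g = ext_to_rat.construct (insert (ext_gen j) B)
    (\<lambda>b. if b = ext_gen j then 1 else 0)"
  have lin: "Vector_Spaces.linear ext_scale (*) g"
    unfolding g_def by (rule ext_to_rat.linear_construct[OF indep])
  have g_gen: "g (ext_gen j) = 1"
    unfolding g_def by (simp add: ext_to_rat.construct_basis[OF indep])
  have g_B: "g b = 0" if "b \<in> B" for b
  proof -
    have "b \<noteq> ext_gen j" using that B(1) j by blast
    with that show ?thesis unfolding g_def by (simp add: ext_to_rat.construct_basis[OF indep])
  qed
  define \<phi> where "\<phi> l = g (ext_gen l)" for l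
  show ?thesis
  proof (rule that)
    show "\<phi> j = 1" by (simp add: \<phi>_def g_gen)
    show "\<forall>v\<in>V. pairing n \<phi> v = 0"
    proof
      fix v assume v: "v \<in> V"
      then have "g v = 0"
        using B(3) g_B by (blast intro: ext_to_rat.linear_eq_0_on_span[OF lin])
      moreover have "g v = g (\<Sum>l<n. ext_scale (v {l}) (ext_gen l))"
        using gen_space_decomp v V(2) by auto
      moreover have "\<dots> = pairing n \<phi> v"
        unfolding ext_to_rat.linear_sum[OF lin] ext_to_rat.linear_scale[OF lin]
        by (simp add: pairing_def \<phi>_def mult.commute)
      ultimately show "pairing n \<phi> v = 0" by simp
    qed
  qed
qed

lemma contract_ext_mon:
  assumes "J \<subseteq> {..<n}" "j \<in> J"
  shows "contract n \<phi> (ext_mon J) (J - {j}) = \<phi> j * ext_sign {j} (J - {j})"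
proof -
  have "contract n \<phi> (ext_mon J) (J - {j}) =
      (\<Sum>l\<in>{..<n} - (J - {j}). if l = j then \<phi> j * ext_sign {j} (J - {j}) else 0)"
    unfolding contract_def
  proof (rule sum.cong[OF refl])
    fix l assume "l \<in> {..<n} - (J - {j})"
    then have "insert l (J - {j}) = J \<longleftrightarrow> l = j" using assms by blast
    then show "\<phi> l * ext_sign {l} (J - {j}) * ext_mon J (insert l (J - {j})) =
        (if l = j then \<phi> j * ext_sign {j} (J - {j}) else 0)"
      by (auto simp: ext_mon_def)
  qed
  also have "\<dots> = \<phi> j * ext_sign {j} (J - {j})" using assms by (simp add: subset_iff)
  finally show ?thesis .
qed

text \<open>If \<open>w\<^sub>J \<in> \<Lambda>V\<close> for a subspace \<open>V \<subseteq> W\<close>, then every factor \<open>w\<^sub>j\<close> of \<open>w\<^sub>J\<close> lies in V: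
  otherwise a functional vanishing on V with \<open>\<phi> j = 1\<close> gives a contraction that kills \<open>\<Lambda>V\<close>
  but not \<open>w\<^sub>J\<close>.\<close>

lemma ext_gen_mem_if_ext_mon_mem_subalg:
  assumes V: "is_subspace V" "V \<subseteq> gen_space n" and J: "J \<subseteq> {..<n}" "j \<in> J"
    and mem: "ext_mon J \<in> subalg V"
  shows "ext_gen j \<in> V"
proof (rule ccontr)
  assume "ext_gen j \<notin> V"
  then obtain \<phi> where \<phi>: "\<phi> j = 1" "\<forall>v\<in>V. pairing n \<phi> v = 0"
    using separating_functional[OF V] by blast
  have "contract n \<phi> (ext_mon J) = 0"
    by (rule contract_subalg_eq_0[OF V(2) \<phi>(2) mem])
  then have "contract n \<phi> (ext_mon J) (J - {j}) = 0" by simp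
  with contract_ext_mon[OF J] \<phi>(1) ext_sign_nonzero show False by simp
qed

section \<open>The monomial basis\<close>

lemma subspace_ext_carrier: "ext_vs.subspace (ext_carrier n)"
proof -
  have "S \<subseteq> {..<n}" if "(x + y) S \<noteq> 0" "x \<in> ext_carrier n" "y \<in> ext_carrier n" for x y S
    using that by (cases "x S = 0") (auto simp: ext_carrier_def)
  then show ?thesis
    unfolding ext_vs.subspace_def by (auto simp: ext_carrier_def ext_scale_apply)
qed

lemma ext_carrier_decomp:
  assumes "x \<in> ext_carrier n"
  shows "x = (\<Sum>S\<in>Pow {..<n}. ext_scale (x S) (ext_mon S))"
proof
  fix T
  have "(\<Sum>S\<in>Pow {..<n}. ext_scale (x S) (ext_mon S)) T = (\<Sum>S\<in>Pow {..<n}. x S * ext_mon S T)"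
    by (simp add: sum_fun_apply ext_scale_apply)
  also have "\<dots> = (\<Sum>S\<in>Pow {..<n}. if S = T then x T else 0)"
    by (rule sum.cong) (auto simp: ext_mon_def)
  also have "\<dots> = x T"
    using assms by (auto simp: ext_carrier_def)
  finally show "x T = (\<Sum>S\<in>Pow {..<n}. ext_scale (x S) (ext_mon S)) T" by simp
qed

lemma ext_carrier_in_span_ext_mon:
  assumes "x \<in> ext_carrier n" "A \<subseteq> Pow {..<n}" "\<And>T. x T \<noteq> 0 \<Longrightarrow> T \<in> A"
  shows "x \<in> ext_vs.span (ext_mon ` A)"
proof -
  have "x = (\<Sum>S\<in>Pow {..<n}. ext_scale (x S) (ext_mon S))"
    by (rule ext_carrier_decomp[OF assms(1)])
  also have "\<dots> = (\<Sum>S\<in>A. ext_scale (x S) (ext_mon S))"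
    by (rule sum.mono_neutral_right) (use assms in \<open>auto simp: ext_vs.scale_zero_left\<close>)
  also have "\<dots> \<in> ext_vs.span (ext_mon ` A)"
    by (intro ext_vs.span_sum ext_vs.span_scale ext_vs.span_base) auto
  finally show ?thesis .
qed

lemma ext_carrier_eq_span: "ext_carrier n = ext_vs.span (ext_mon ` Pow {..<n})"
proof
  show "ext_carrier n \<subseteq> ext_vs.span (ext_mon ` Pow {..<n})"
  proof
    fix x assume "x \<in> ext_carrier n"
    then show "x \<in> ext_vs.span (ext_mon ` Pow {..<n})"
      by (rule ext_carrier_in_span_ext_mon) (use \<open>x \<in> ext_carrier n\<close> in \<open>auto simp: ext_carrier_def\<close>)
  qed
  have "ext_mon ` Pow {..<n} \<subseteq> ext_carrier n"
    by (auto simp: ext_carrier_def ext_mon_def split: if_splits)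
  then show "ext_vs.span (ext_mon ` Pow {..<n}) \<subseteq> ext_carrier n"
    using subspace_ext_carrier by (rule ext_vs.span_minimal)
qed

lemma inj_ext_mon: "inj ext_mon"
proof (rule injI)
  fix S T assume "ext_mon S = ext_mon T"
  then have "ext_mon S S = ext_mon T S" by simp
  then show "S = T" by (simp add: ext_mon_def split: if_splits)
qed

lemma independent_ext_mon: "finite A \<Longrightarrow> ext_vs.independent (ext_mon ` A)"
  unfolding ext_vs.independent_explicit_finite_subsets
proof (intro allI impI ballI)
  fix S u v
  assume S: "S \<subseteq> ext_mon ` A" "finite S" and sum: "(\<Sum>v\<in>S. ext_scale (u v) v) = 0"
    and v: "v \<in> S"
  then obtain T where T: "v = ext_mon T" by blast
  have "(\<Sum>v\<in>S. ext_scale (u v) v) T = (\<Sum>w\<in>S. if w = v then u v else 0)"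
    unfolding sum_fun_apply ext_scale_apply
  proof (rule sum.cong[OF refl])
    fix w assume "w \<in> S"
    then obtain T' where T': "w = ext_mon T'" using S by blast
    then have "w = v \<longleftrightarrow> T' = T" using T inj_ext_mon by (auto dest: injD)
    then show "u w * w T = (if w = v then u v else 0)" using T' by (auto simp: ext_mon_def)
  qed
  with v S(2) sum show "u v = 0" by simp
qed

lemma dim_span_ext_mon: "finite A \<Longrightarrow> ext_vs.dim (ext_vs.span (ext_mon ` A)) = card A"
  using ext_vs.dim_span_eq_card_independent[OF independent_ext_mon]
  by (simp add: card_image inj_on_subset[OF inj_ext_mon])

section \<open>Counting nonzero coefficients\<close>

definition nonzero_coeffs :: "'a::zero poly \<Rightarrow> nat set" where
  "nonzero_coeffs p = {k. coeff p k \<noteq> 0}"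

lemma finite_nonzero_coeffs: "finite (nonzero_coeffs p)"
  by (rule finite_subset[of _ "{..degree p}"]) (auto simp: nonzero_coeffs_def le_degree)

lemma monom_mult_coeff_0_nonzero_exists:
  fixes p :: "'a::comm_semiring_1 poly"
  assumes "p \<noteq> 0"
  shows "\<exists>q k. p = monom 1 k * q \<and> coeff q 0 \<noteq> 0"
  using assms
proof (induction p)
  case (pCons a p)
  show ?case
  proof (cases "a = 0")
    case False
    then show ?thesis
      by (intro exI[of _ "pCons a p"] exI[of _ 0]) (simp add: monom_0 one_pCons)
  next
    case True
    with pCons.prems obtain q k where "p = monom 1 k * q" "coeff q 0 \<noteq> 0"
      using pCons.IH by auto
    with True have "pCons a p = monom 1 (Suc k) * q \<and> coeff q 0 \<noteq> 0"
      by (simp add: monom_Suc)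
    then show ?thesis by blast
  qed
qed simp

lemma nonzero_coeffs_monom_mult:
  fixes q :: "'a::comm_semiring_1 poly"
  shows "nonzero_coeffs (monom 1 k * q) = (\<lambda>j. j + k) ` nonzero_coeffs q"
proof -
  have "nonzero_coeffs (monom 1 k * q) = {j. k \<le> j \<and> coeff q (j - k) \<noteq> 0}"
    by (auto simp: nonzero_coeffs_def coeff_monom_mult)
  also have "\<dots> = (\<lambda>j. j + k) ` nonzero_coeffs q"
    by (auto simp: nonzero_coeffs_def image_iff) (metis le_add_diff_inverse2)
  finally show ?thesis .
qed

lemma order_1_monom_mult:
  fixes q :: "'a::idom poly"
  assumes "q \<noteq> 0"
  shows "order 1 (monom 1 k * q) = order 1 q"
proof -
  have "order 1 (monom (1::'a) k) = 0" by (rule order_0I) (simp add: poly_monom)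
  with assms show ?thesis by (simp add: order_mult monom_eq_0_iff)
qed

lemma card_nonzero_coeffs_pderiv:
  fixes r :: "'a::{idom,semiring_char_0} poly"
  assumes "coeff r 0 \<noteq> 0"
  shows "card (nonzero_coeffs r) = Suc (card (nonzero_coeffs (pderiv r)))"
proof -
  have "nonzero_coeffs (pderiv r) = {j. coeff r (Suc j) \<noteq> 0}"
    by (simp add: nonzero_coeffs_def coeff_pderiv del: of_nat_Suc)
  with assms have "nonzero_coeffs r = insert 0 (Suc ` nonzero_coeffs (pderiv r))"
    by (auto simp: nonzero_coeffs_def image_iff) (metis not0_implies_Suc)
  then show ?thesis
    by (simp add: card_insert_disjoint finite_nonzero_coeffs card_image)
qed

text \<open>A weak form of Descartes' rule of signs.  After splitting off the power of x,
  differentiation lowers the order at 1 by at most one and removes exactly one nonzero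
  coefficient.\<close>

lemma order_1_less_card_nonzero_coeffs:
  fixes q :: "'a::{idom,semiring_char_0} poly"
  assumes "q \<noteq> 0"
  shows "order 1 q < card (nonzero_coeffs q)"
  using assms
proof (induction "card (nonzero_coeffs q)" arbitrary: q rule: less_induct)
  case less
  obtain r k where qr: "q = monom 1 k * r" and r: "coeff r 0 \<noteq> 0"
    using monom_mult_coeff_0_nonzero_exists[OF less.prems] by blast
  then have "r \<noteq> 0" by auto
  have card_eq: "card (nonzero_coeffs q) = card (nonzero_coeffs r)"
    unfolding qr nonzero_coeffs_monom_mult by (rule card_image) (simp add: inj_on_def)
  have order_eq: "order 1 q = order 1 r"
    unfolding qr by (rule order_1_monom_mult[OF \<open>r \<noteq> 0\<close>])
  show ?case
  proof (cases "pderiv r = 0")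
    case True
    then have r_const: "[:coeff r 0:] = r" by (simp add: pderiv_eq_0_iff degree_0_id)
    have "poly r 1 = coeff r 0" by (subst r_const[symmetric]) simp
    with r have "order 1 r = 0" by (simp add: order_0I)
    then show ?thesis
      using order_eq card_eq card_nonzero_coeffs_pderiv[OF r] by simp
  next
    case False
    have "order 1 r \<le> Suc (order 1 (pderiv r))"
    proof (cases "poly r 1 = 0")
      case True
      then show ?thesis by (simp only: order_pderiv[OF \<open>r \<noteq> 0\<close> True])
    qed (simp add: order_0I)
    moreover have "order 1 (pderiv r) < card (nonzero_coeffs (pderiv r))"
      using less.hyps[OF _ False] card_eq card_nonzero_coeffs_pderiv[OF r] by simp
    ultimately show ?thesis
      using order_eq card_eq card_nonzero_coeffs_pderiv[OF r] by simp
  qed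
qed

lemma prod_one_minus_monom:
  fixes \<nu> :: "'b \<Rightarrow> nat"
  assumes "finite A"
  shows "(\<Prod>i\<in>A. 1 - monom (1::'a::comm_ring_1) (\<nu> i)) =
    (\<Sum>S\<in>Pow A. monom ((-1) ^ card S) (\<Sum>i\<in>S. \<nu> i))"
  using assms
proof (induction A rule: finite_induct)
  case (insert a A)
  let ?m = "\<lambda>S. monom ((-1::'a) ^ card S) (\<Sum>i\<in>S. \<nu> i)"
  have shift: "?m (insert a S) = - (monom 1 (\<nu> a) * ?m S)" if "S \<in> Pow A" for S
  proof -
    from that insert have "a \<notin> S" "finite S" by (auto intro: finite_subset)
    then show ?thesis by (simp add: mult_monom minus_monom)
  qed
  have "(\<Prod>i\<in>insert a A. 1 - monom (1::'a) (\<nu> i)) = (1 - monom 1 (\<nu> a)) * (\<Sum>S\<in>Pow A. ?m S)"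
    using insert by simp
  also have "\<dots> = (\<Sum>S\<in>Pow A. ?m S) - monom 1 (\<nu> a) * (\<Sum>S\<in>Pow A. ?m S)"
    by (simp add: left_diff_distrib)
  also have "\<dots> = (\<Sum>S\<in>Pow A. ?m S) + (\<Sum>S\<in>Pow A. ?m (insert a S))"
    by (simp add: shift sum_distrib_left sum_negf)
  also have "\<dots> = (\<Sum>S\<in>Pow A \<union> insert a ` Pow A. ?m S)"
  proof -
    have "inj_on (insert a) (Pow A)" "Pow A \<inter> insert a ` Pow A = {}"
      using insert(2) by (auto simp: inj_on_def)
    with insert(1) show ?thesis by (simp add: sum.union_disjoint sum.reindex)
  qed
  also have "\<dots> = (\<Sum>S\<in>Pow (insert a A). ?m S)"
    by (simp add: Pow_insert)
  finally show ?case .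
qed (simp add: monom_0 one_pCons)

definition subsets_by_weight :: "'b set \<Rightarrow> ('b \<Rightarrow> nat) \<Rightarrow> nat \<Rightarrow> bool \<Rightarrow> 'b set set" where
  "subsets_by_weight A \<nu> m p = {S \<in> Pow A. (\<Sum>i\<in>S. \<nu> i) = m \<and> even (card S) = p}"

lemma finite_subsets_by_weight: "finite A \<Longrightarrow> finite (subsets_by_weight A \<nu> m p)"
  by (simp add: subsets_by_weight_def)

lemma coeff_prod_one_minus_monom:
  fixes \<nu> :: "'b \<Rightarrow> nat"
  assumes "finite A"
  shows "coeff (\<Prod>i\<in>A. 1 - monom (1::int) (\<nu> i)) m =
    int (card (subsets_by_weight A \<nu> m True)) - int (card (subsets_by_weight A \<nu> m False))"
proof -
  let ?E = "subsets_by_weight A \<nu> m True" and ?O = "subsets_by_weight A \<nu> m False"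
  have "{S \<in> Pow A. (\<Sum>i\<in>S. \<nu> i) = m} = ?E \<union> ?O"
    by (auto simp: subsets_by_weight_def)
  moreover have "finite ?E" "finite ?O" "?E \<inter> ?O = {}"
    using assms by (auto simp: subsets_by_weight_def)
  ultimately have "(\<Sum>S\<in>{S \<in> Pow A. (\<Sum>i\<in>S. \<nu> i) = m}. (-1::int) ^ card S) =
      (\<Sum>S\<in>?E. (-1) ^ card S) + (\<Sum>S\<in>?O. (-1) ^ card S)"
    by (simp add: sum.union_disjoint)
  also have "\<dots> = int (card ?E) - int (card ?O)"
    by (simp add: subsets_by_weight_def)
  finally show ?thesis
    unfolding prod_one_minus_monom[OF assms] coeff_sum
    using assms by (simp add: sum.inter_filter[symmetric] eq_commute)
qed

lemma order_1_prod_one_minus_monom: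
  fixes \<nu> :: "'b \<Rightarrow> nat"
  assumes "finite A" "\<And>i. i \<in> A \<Longrightarrow> \<nu> i \<ge> 1"
  shows "(\<Prod>i\<in>A. 1 - monom (1::int) (\<nu> i)) \<noteq> 0"
    and "card A \<le> order 1 (\<Prod>i\<in>A. 1 - monom (1::int) (\<nu> i))"
proof -
  let ?P = "\<Prod>i\<in>A. 1 - monom (1::int) (\<nu> i)"
  have "1 - monom (1::int) (\<nu> i) \<noteq> 0" if "i \<in> A" for i
  proof
    assume "1 - monom (1::int) (\<nu> i) = 0"
    then have "coeff (1 - monom (1::int) (\<nu> i)) 0 = 0" by simp
    with assms(2)[OF that] show False by simp
  qed
  with assms(1) show "?P \<noteq> 0" by (simp add: prod_zero_iff)
  have "[:-1, 1:] dvd 1 - monom (1::int) (\<nu> i)" for i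
    by (simp add: poly_eq_0_iff_dvd[symmetric] poly_monom)
  then have "(\<Prod>i\<in>A. [:-1, 1:]) dvd ?P"
    by (rule prod_dvd_prod)
  with \<open>?P \<noteq> 0\<close> show "card A \<le> order 1 ?P"
    by (simp add: order_divides)
qed

lemma card_less_sum_abs_even_odd_diff:
  fixes \<nu> :: "'b \<Rightarrow> nat"
  assumes fin: "finite A" and pos: "\<And>i. i \<in> A \<Longrightarrow> \<nu> i \<ge> 1"
  shows "card A < (\<Sum>m\<le>(\<Sum>i\<in>A. \<nu> i).
    \<bar>int (card (subsets_by_weight A \<nu> m True)) - int (card (subsets_by_weight A \<nu> m False))\<bar>)"
proof -
  let ?P = "\<Prod>i\<in>A. 1 - monom (1::int) (\<nu> i)"
  have "int (card A) < int (card (nonzero_coeffs ?P))"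
    using order_1_prod_one_minus_monom[OF assms] order_1_less_card_nonzero_coeffs by fastforce
  also have "\<dots> = (\<Sum>m\<in>nonzero_coeffs ?P. 1)" by simp
  also have "\<dots> \<le> (\<Sum>m\<in>nonzero_coeffs ?P. \<bar>coeff ?P m\<bar>)"
    by (rule sum_mono) (auto simp: nonzero_coeffs_def)
  also have "\<dots> \<le> (\<Sum>m\<le>(\<Sum>i\<in>A. \<nu> i). \<bar>coeff ?P m\<bar>)"
  proof (rule sum_mono2)
    show "nonzero_coeffs ?P \<subseteq> {..(\<Sum>i\<in>A. \<nu> i)}"
    proof
      fix m assume "m \<in> nonzero_coeffs ?P"
      then have "subsets_by_weight A \<nu> m True \<union> subsets_by_weight A \<nu> m False \<noteq> {}"
        by (auto simp: nonzero_coeffs_def coeff_prod_one_minus_monom[OF fin])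
      then obtain S where "S \<subseteq> A" "(\<Sum>i\<in>S. \<nu> i) = m"
        by (auto simp: subsets_by_weight_def)
      with fin show "m \<in> {..(\<Sum>i\<in>A. \<nu> i)}" by (auto intro: sum_mono2)
    qed
  qed auto
  finally show ?thesis
    by (simp add: coeff_prod_one_minus_monom[OF fin])
qed

section \<open>Sullivan algebras with monomial differential\<close>

lemma mon_degree_parity:
  assumes "finite T" "\<forall>i\<in>T. odd (deg i)"
  shows "even (mon_degree deg T) \<longleftrightarrow> even (card T)"
  using assms by (induction T rule: finite_induct) (auto simp: mon_degree_def)

locale monomial_sullivan =
  fixes n :: nat and deg :: "nat \<Rightarrow> nat" and d :: "ext \<Rightarrow> ext"
    and c :: "nat \<Rightarrow> rat" and J :: "nat \<Rightarrow> nat set"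
  assumes sullivan: "sullivan_algebra n deg d"
    and odd_deg: "\<forall>i<n. odd (deg i)"
    and monomial: "\<forall>i<n. J i \<subseteq> {..<n} \<and> d (ext_gen i) = ext_scale (c i) (ext_mon (J i))"
begin

abbreviation carrier :: "ext set" where
  "carrier \<equiv> ext_carrier n"

lemma d_carrier: "x \<in> carrier \<Longrightarrow> d x \<in> carrier"
  and d_add: "x \<in> carrier \<Longrightarrow> y \<in> carrier \<Longrightarrow> d (x + y) = d x + d y"
  and d_scale: "x \<in> carrier \<Longrightarrow> d (ext_scale a x) = ext_scale a (d x)"
  and d_homogeneous: "x \<in> carrier \<Longrightarrow> homogeneous deg p x \<Longrightarrow> homogeneous deg (p + 1) (d x)"
  and d_ext_mult: "x \<in> carrier \<Longrightarrow> y \<in> carrier \<Longrightarrow> homogeneous deg p x \<Longrightarrow>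
    d (ext_mult x y) = ext_mult (d x) y + ext_scale ((-1) ^ p) (ext_mult x (d y))"
  and d_d: "x \<in> carrier \<Longrightarrow> d (d x) = 0"
  using sullivan by (simp_all add: sullivan_algebra_def)

lemma J_subset: "i < n \<Longrightarrow> J i \<subseteq> {..<n}"
  and d_ext_gen: "i < n \<Longrightarrow> d (ext_gen i) = ext_scale (c i) (ext_mon (J i))"
  using monomial by simp_all

lemma ext_mon_carrier: "S \<subseteq> {..<n} \<Longrightarrow> ext_mon S \<in> carrier"
  by (auto simp: ext_carrier_def ext_mon_def)

lemma ext_gen_carrier: "i < n \<Longrightarrow> ext_gen i \<in> carrier"
  by (simp add: ext_gen_def ext_mon_carrier)

lemma ext_mon_homogeneous: "homogeneous deg (mon_degree deg S) (ext_mon S)"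
  by (simp add: homogeneous_def ext_mon_def)

lemma ext_gen_homogeneous: "homogeneous deg (deg i) (ext_gen i)"
  using ext_mon_homogeneous[of "{i}"] by (simp add: mon_degree_def ext_gen_def)

lemma J_nonempty:
  assumes "i < n" "c i \<noteq> 0"
  shows "J i \<noteq> {}"
proof -
  have "homogeneous deg (deg i + 1) (d (ext_gen i))"
    using assms by (intro d_homogeneous ext_gen_carrier ext_gen_homogeneous)
  then have "mon_degree deg (J i) = deg i + 1"
    using assms d_ext_gen[of i] by (auto simp: homogeneous_def ext_mon_def ext_scale_def)
  then show ?thesis by (auto simp: mon_degree_def)
qed

text \<open>The Sullivan filtration makes the relation "j occurs in \<open>d w\<^sub>i \<noteq> 0\<close>" well founded:
  \<open>d w\<^sub>i\<close> lies in the subalgebra generated by the previous filtration stage, hence so do all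
  of its factors.\<close>

lemma level_exists:
  obtains level :: "nat \<Rightarrow> nat"
  where "\<And>i j. i < n \<Longrightarrow> c i \<noteq> 0 \<Longrightarrow> j \<in> J i \<Longrightarrow> level j < level i"
proof -
  obtain Wf :: "nat \<Rightarrow> ext set" where W: "\<And>k. is_subspace (Wf k)"
    "\<And>k. Wf k \<subseteq> gen_space n" "\<And>k. Wf k \<subseteq> Wf (Suc k)" "(\<Union>k. Wf k) = gen_space n"
    "\<And>x. x \<in> Wf 0 \<Longrightarrow> d x = 0" "\<And>k x. x \<in> Wf (Suc k) \<Longrightarrow> d x \<in> subalg (Wf k)"
    using sullivan unfolding sullivan_algebra_def by metis
  have W_mono: "Wf k \<subseteq> Wf k'" if "k \<le> k'" for k k'
    using that by (induction rule: dec_induct) (use W(3) in blast)+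
  define level where "level i = (LEAST k. ext_gen i \<in> Wf k)" for i
  have level_mem: "ext_gen i \<in> Wf (level i)" if "i < n" for i
  proof -
    have "ext_gen i \<in> gen_space n"
      using that by (auto simp: gen_space_def ext_gen_def ext_mon_def)
    then have "\<exists>k. ext_gen i \<in> Wf k" using W(4) by blast
    then show ?thesis unfolding level_def by (rule LeastI_ex)
  qed
  have level_le: "level i \<le> k" if "ext_gen i \<in> Wf k" for i k
    unfolding level_def using that by (rule Least_le)
  show ?thesis
  proof (rule that)
    fix i j assume i: "i < n" "c i \<noteq> 0" and j: "j \<in> J i"
    have "d (ext_gen i) (J i) \<noteq> 0"
      using d_ext_gen[OF i(1)] i(2) by (simp add: ext_mon_def ext_scale_def)
    then obtain k where k: "level i = Suc k"
      using level_mem[OF i(1)] W(5) by (cases "level i") auto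
    then have "ext_scale (1 / c i) (d (ext_gen i)) \<in> subalg (Wf k)"
      using level_mem[OF i(1)] W(6) by (metis subalg.sub_scale)
    moreover have "ext_scale (1 / c i) (d (ext_gen i)) = ext_mon (J i)"
      using i d_ext_gen[OF i(1)] by (simp add: ext_scale_def)
    ultimately have "ext_gen j \<in> Wf k"
      using ext_gen_mem_if_ext_mon_mem_subalg[OF W(1) W(2) J_subset[OF i(1)] j] by simp
    then show "level j < level i" using level_le k by fastforce
  qed
qed

text \<open>Weights with \<open>\<nu> i = \<Sum>j\<in>J i. \<nu> j\<close> whenever \<open>d w\<^sub>i \<noteq> 0\<close>, obtained by unfolding this
  recursion finitely often; by well-foundedness the iterates stabilise.\<close>

primrec weight_iter :: "nat \<Rightarrow> nat \<Rightarrow> nat" where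
  "weight_iter 0 i = 1"
| "weight_iter (Suc t) i = (if c i \<noteq> 0 then (\<Sum>j\<in>J i. weight_iter t j) else 1)"

lemma weight_iter_pos: "i < n \<Longrightarrow> weight_iter t i \<ge> 1"
proof (induction t arbitrary: i)
  case (Suc t)
  show ?case
  proof (cases "c i \<noteq> 0")
    case True
    then obtain j where j: "j \<in> J i" using J_nonempty[OF Suc.prems] by blast
    have "finite (J i)" using J_subset[OF Suc.prems] finite_subset by blast
    then have "weight_iter t j \<le> (\<Sum>j\<in>J i. weight_iter t j)"
      using j by (intro member_le_sum) auto
    moreover have "weight_iter t j \<ge> 1" using Suc.IH j J_subset[OF Suc.prems] by auto
    ultimately show ?thesis using True by simp
  qed simp
qed simp

lemma weight_iter_stable:
  assumes level: "\<And>i j. i < n \<Longrightarrow> c i \<noteq> 0 \<Longrightarrow> j \<in> J i \<Longrightarrow> level j < level i"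
  shows "i < n \<Longrightarrow> level i < t \<Longrightarrow> weight_iter (t + s) i = weight_iter t i"
proof (induction t arbitrary: i)
  case (Suc t)
  show ?case
  proof (cases "c i \<noteq> 0")
    case True
    have "weight_iter (t + s) j = weight_iter t j" if "j \<in> J i" for j
      using Suc level[OF Suc.prems(1) True that] J_subset[OF Suc.prems(1)] that by auto
    then show ?thesis using True by simp
  qed simp
qed simp

lemma weights_exist:
  "\<exists>\<nu> :: nat \<Rightarrow> nat. (\<forall>i<n. \<nu> i \<ge> 1) \<and> (\<forall>i<n. c i \<noteq> 0 \<longrightarrow> \<nu> i = (\<Sum>j\<in>J i. \<nu> j))"
proof -
  obtain level :: "nat \<Rightarrow> nat"
    where level: "\<And>i j. i < n \<Longrightarrow> c i \<noteq> 0 \<Longrightarrow> j \<in> J i \<Longrightarrow> level j < level i"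
    by (fact level_exists)
  define T where "T = Suc (Max (level ` {..<n}))"
  have level_less: "level i < T" if "i < n" for i
    unfolding T_def using that by (simp add: le_imp_less_Suc)
  have "weight_iter T i = (\<Sum>j\<in>J i. weight_iter T j)" if i: "i < n" "c i \<noteq> 0" for i
  proof -
    have "weight_iter T i = weight_iter (T + 1) i"
      using weight_iter_stable[of level, OF level i(1) level_less[OF i(1)]] by metis
    then show ?thesis using i by simp
  qed
  then show ?thesis using weight_iter_pos by blast
qed

lemma d_mon_parity:
  assumes "S \<subseteq> {..<n}" "d (ext_mon S) T \<noteq> 0"
  shows "even (card T) \<longleftrightarrow> odd (card S)"
proof -
  have "homogeneous deg (mon_degree deg S + 1) (d (ext_mon S))"
    by (rule d_homogeneous[OF ext_mon_carrier[OF assms(1)] ext_mon_homogeneous])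
  then have "mon_degree deg T = mon_degree deg S + 1"
    using assms(2) by (simp add: homogeneous_def)
  moreover have "T \<subseteq> {..<n}"
    using d_carrier[OF ext_mon_carrier[OF assms(1)]] assms(2) by (simp add: ext_carrier_def)
  ultimately show ?thesis
    using assms(1) odd_deg mon_degree_parity[of T deg] mon_degree_parity[of S deg]
    by (auto intro: finite_subset)
qed

lemma d_zero: "d 0 = 0"
proof -
  have "(0::ext) \<in> carrier" by (simp add: ext_carrier_def)
  then have "d (0 + 0) = d 0 + d 0" by (intro d_add)
  then show ?thesis by simp
qed

lemma d_sum:
  "finite A \<Longrightarrow> (\<And>a. a \<in> A \<Longrightarrow> f a \<in> carrier) \<Longrightarrow> d (sum f A) = (\<Sum>a\<in>A. d (f a))"
proof (induction A rule: finite_induct)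
  case (insert a A)
  then have "sum f A \<in> carrier"
    by (intro ext_vs.subspace_sum[OF subspace_ext_carrier]) auto
  then have "d (f a + sum f A) = d (f a) + d (sum f A)"
    using insert.prems by (intro d_add) auto
  also have "d (sum f A) = (\<Sum>a\<in>A. d (f a))"
    using insert.prems by (intro insert.IH) auto
  finally show ?case unfolding sum.insert[OF insert.hyps] .
qed (simp add: d_zero)

lemma d_unit: "d (ext_mon {}) = 0"
proof -
  have one: "ext_mon {} \<in> carrier" by (rule ext_mon_carrier) simp
  have "homogeneous deg 0 (ext_mon {})"
    using ext_mon_homogeneous[of "{}"] by (simp add: mon_degree_def)
  then have "d (ext_mult (ext_mon {}) (ext_mon {})) =
      ext_mult (d (ext_mon {})) (ext_mon {}) + ext_scale 1 (ext_mult (ext_mon {}) (d (ext_mon {})))"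
    using d_ext_mult[OF one one] by simp
  moreover have "finitary (d (ext_mon {}))"
    by (rule finitary_carrier[OF d_carrier[OF one]])
  ultimately have "d (ext_mon {}) = d (ext_mon {}) + d (ext_mon {})"
    by (simp add: ext_mult_one_left ext_mult_one_right finitary_ext_mon ext_scale_def)
  then show ?thesis by simp
qed

text \<open>d is only known to be linear on the carrier, whereas the dimension lemmas above are
  stated for linear maps on all of ext; dlin extends d through the monomial basis.\<close>

definition dlin :: "ext \<Rightarrow> ext" where
  "dlin x = (\<Sum>S\<in>Pow {..<n}. ext_scale (x S) (d (ext_mon S)))"

lemma linear_dlin: "Vector_Spaces.linear ext_scale ext_scale dlin"
  unfolding Vector_Spaces.linear_iff
  by (simp add: ext_vs.vector_space_axioms dlin_def ext_scale_apply ext_vs.scale_left_distrib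
      sum.distrib ext_vs.scale_sum_right)

lemma dlin_span: "dlin ` ext_vs.span X = ext_vs.span (dlin ` X)"
  by (rule ext_to_ext.linear_span_image[OF linear_dlin, symmetric])

lemma dlin_eq_d:
  assumes "x \<in> carrier"
  shows "dlin x = d x"
proof -
  have "d x = d (\<Sum>S\<in>Pow {..<n}. ext_scale (x S) (ext_mon S))"
    using ext_carrier_decomp[OF assms] by (rule arg_cong)
  also have "\<dots> = (\<Sum>S\<in>Pow {..<n}. d (ext_scale (x S) (ext_mon S)))"
    by (rule d_sum) (auto intro: ext_vs.subspace_scale[OF subspace_ext_carrier] ext_mon_carrier)
  also have "\<dots> = dlin x"
    unfolding dlin_def by (rule sum.cong) (auto simp: d_scale ext_mon_carrier)
  finally show ?thesis by simp
qed

lemma cohom_dim_eq: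
  "cohom_dim n d = ext_vs.dim {x \<in> ext_vs.span (ext_mon ` Pow {..<n}). dlin x = 0}
     - ext_vs.dim (dlin ` ext_vs.span (ext_mon ` Pow {..<n}))"
proof -
  have "{x \<in> carrier. d x = 0} = {x \<in> carrier. dlin x = 0}" "d ` carrier = dlin ` carrier"
    using dlin_eq_d by auto
  then show ?thesis
    unfolding cohom_dim_def rat_vdim_def ext_carrier_eq_span by simp
qed

end

section \<open>Weights and the rank of d\<close>

locale weighted_monomial_sullivan = monomial_sullivan +
  fixes \<nu> :: "nat \<Rightarrow> nat"
  assumes weight_pos: "\<And>i. i < n \<Longrightarrow> \<nu> i \<ge> 1"
    and weight_balanced: "\<And>i. i < n \<Longrightarrow> c i \<noteq> 0 \<Longrightarrow> \<nu> i = (\<Sum>j\<in>J i. \<nu> j)"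
begin

definition weight_homogeneous :: "nat \<Rightarrow> ext \<Rightarrow> bool" where
  "weight_homogeneous m x \<longleftrightarrow> (\<forall>S. x S \<noteq> 0 \<longrightarrow> (\<Sum>i\<in>S. \<nu> i) = m)"

lemma weight_homogeneous_add:
  "weight_homogeneous m x \<Longrightarrow> weight_homogeneous m y \<Longrightarrow> weight_homogeneous m (x + y)"
  unfolding weight_homogeneous_def by (metis add.right_neutral plus_fun_apply)

lemma weight_homogeneous_scale: "weight_homogeneous m x \<Longrightarrow> weight_homogeneous m (ext_scale a x)"
  by (auto simp: weight_homogeneous_def ext_scale_def)

lemma weight_homogeneous_ext_mon: "weight_homogeneous (\<Sum>i\<in>S. \<nu> i) (ext_mon S)"
  by (simp add: weight_homogeneous_def ext_mon_def)

lemma weight_homogeneous_ext_mult: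
  assumes "weight_homogeneous m1 x" "weight_homogeneous m2 y"
  shows "weight_homogeneous (m1 + m2) (ext_mult x y)"
  unfolding weight_homogeneous_def
proof (intro allI impI)
  fix S assume nz: "ext_mult x y S \<noteq> 0"
  then have "finite S" using ext_mult_infinite by blast
  from nz obtain T where T: "T \<subseteq> S" "x T * y (S - T) * ext_sign T (S - T) \<noteq> 0"
    unfolding ext_mult_def by (meson PowD sum.not_neutral_contains_not_neutral)
  then have "(\<Sum>i\<in>T. \<nu> i) = m1" "(\<Sum>i\<in>S - T. \<nu> i) = m2"
    using assms by (auto simp: weight_homogeneous_def)
  moreover have "(\<Sum>i\<in>S. \<nu> i) = (\<Sum>i\<in>T. \<nu> i) + (\<Sum>i\<in>S - T. \<nu> i)"
    using \<open>finite S\<close> T(1) by (simp add: sum.subset_diff)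
  ultimately show "(\<Sum>i\<in>S. \<nu> i) = m1 + m2" by simp
qed

lemma weight_homogeneous_d_ext_gen:
  assumes "i < n"
  shows "weight_homogeneous (\<nu> i) (d (ext_gen i))"
proof (cases "c i = 0")
  case True
  then show ?thesis
    using d_ext_gen[OF assms] by (simp add: ext_scale_def weight_homogeneous_def)
next
  case False
  then show ?thesis
    using d_ext_gen[OF assms] weight_balanced[OF assms False]
      weight_homogeneous_scale[OF weight_homogeneous_ext_mon]
    by simp
qed

lemma weight_homogeneous_d_ext_mon:
  "S \<subseteq> {..<n} \<Longrightarrow> weight_homogeneous (\<Sum>i\<in>S. \<nu> i) (d (ext_mon S))"
proof (induction "card S" arbitrary: S)
  case 0
  then have "finite S" by (meson finite_lessThan finite_subset)
  with 0 have "S = {}" by simp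
  then show ?case by (simp add: d_unit weight_homogeneous_def)
next
  case (Suc k)
  then have fin: "finite S" and "S \<noteq> {}" by (auto intro: finite_subset)
  define i where "i = Min S"
  define S' where "S' = S - {i}"
  have i: "i \<in> S" "i \<notin> S'" "\<forall>s\<in>S'. i < s"
    using fin \<open>S \<noteq> {}\<close> by (auto simp: i_def S'_def order.strict_iff_order)
  have S: "S = insert i S'" and S': "S' \<subseteq> {..<n}" "finite S'" "card S' = k"
    using i Suc.prems Suc.hyps(2) fin by (auto simp: S'_def)
  have "d (ext_mon S) = ext_mult (d (ext_gen i)) (ext_mon S')
      + ext_scale ((-1) ^ deg i) (ext_mult (ext_gen i) (d (ext_mon S')))"
    unfolding S ext_mult_gen_mon[OF S'(2) i(3), symmetric] using i(1) Suc.prems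
    by (intro d_ext_mult ext_gen_carrier ext_mon_carrier S' ext_gen_homogeneous) auto
  moreover have "weight_homogeneous (\<nu> i + (\<Sum>i\<in>S'. \<nu> i)) (ext_mult (d (ext_gen i)) (ext_mon S'))"
    using i(1) Suc.prems
    by (intro weight_homogeneous_ext_mult weight_homogeneous_d_ext_gen weight_homogeneous_ext_mon)
      auto
  moreover have "weight_homogeneous (\<nu> i + (\<Sum>i\<in>S'. \<nu> i)) (ext_mult (ext_gen i) (d (ext_mon S')))"
    using weight_homogeneous_ext_mult[OF weight_homogeneous_ext_mon[of "{i}"] Suc.hyps(1)[OF S'(3)[symmetric] S'(1)]]
    by (simp add: ext_gen_def)
  ultimately show ?case
    using S i(2) S'(2) by (simp add: weight_homogeneous_add weight_homogeneous_scale)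
qed

abbreviation block_index :: "nat \<Rightarrow> bool \<Rightarrow> nat set set" where
  "block_index m p \<equiv> subsets_by_weight {..<n} \<nu> m p"

definition block :: "nat \<Rightarrow> bool \<Rightarrow> ext set" where
  "block m p = ext_mon ` block_index m p"

lemma finite_block: "finite (block m p)"
  by (simp add: block_def finite_subsets_by_weight)

lemma dlin_ext_mon_block:
  assumes "S \<in> block_index m p"
  shows "dlin (ext_mon S) \<in> ext_vs.span (block m (\<not> p))" and "dlin (dlin (ext_mon S)) = 0"
proof -
  have S: "S \<subseteq> {..<n}" using assms by (auto simp: subsets_by_weight_def)
  have d_S: "dlin (ext_mon S) = d (ext_mon S)" "d (ext_mon S) \<in> carrier"
    using dlin_eq_d d_carrier ext_mon_carrier[OF S] by auto
  show "dlin (ext_mon S) \<in> ext_vs.span (block m (\<not> p))"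
    unfolding d_S(1) block_def
  proof (rule ext_carrier_in_span_ext_mon[OF d_S(2)])
    show "block_index m (\<not> p) \<subseteq> Pow {..<n}" by (auto simp: subsets_by_weight_def)
    fix T assume T: "d (ext_mon S) T \<noteq> 0"
    then have "T \<subseteq> {..<n}" using d_S(2) by (auto simp: ext_carrier_def)
    moreover have "(\<Sum>i\<in>T. \<nu> i) = (\<Sum>i\<in>S. \<nu> i)"
      using weight_homogeneous_d_ext_mon[OF S] T by (simp add: weight_homogeneous_def)
    moreover have "even (card T) \<longleftrightarrow> odd (card S)" by (rule d_mon_parity[OF S T])
    ultimately show "T \<in> block_index m (\<not> p)" using assms by (auto simp: subsets_by_weight_def)
  qed
  show "dlin (dlin (ext_mon S)) = 0"
    unfolding d_S(1) using dlin_eq_d[OF d_S(2)] d_d[OF ext_mon_carrier[OF S]] by simp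
qed

text \<open>The image of the monomials of weight m and parity \<open>\<not> p\<close> lies in the span of those of
  parity p and is killed by d; so on the span of all monomials of weight m, the rank of d
  is at most the number of monomials of either parity.\<close>

lemma dlin_blocks_subset:
  "dlin ` (block m p \<union> block m (\<not> p)) \<subseteq>
     dlin ` ext_vs.span (block m p) \<union> {x \<in> ext_vs.span (block m p). dlin x = 0}"
proof
  fix y assume "y \<in> dlin ` (block m p \<union> block m (\<not> p))"
  then obtain S q where S: "S \<in> block_index m q" "y = dlin (ext_mon S)" "q = p \<or> q = (\<not> p)"
    by (auto simp: block_def)
  show "y \<in> dlin ` ext_vs.span (block m p) \<union> {x \<in> ext_vs.span (block m p). dlin x = 0}"
  proof (cases "q = p")
    case True
    with S show ?thesis by (auto simp: block_def intro: ext_vs.span_base)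
  next
    case False
    with S dlin_ext_mon_block[OF S(1)] show ?thesis by auto
  qed
qed

lemma dim_image_block_le:
  "ext_vs.dim (dlin ` ext_vs.span (block m p \<union> block m (\<not> p))) \<le> card (block_index m p)"
proof -
  let ?E = "ext_vs.span (block m p)"
  let ?K = "{x \<in> ?E. dlin x = 0}"
  have "dlin ` ext_vs.span (block m p \<union> block m (\<not> p)) \<subseteq> ext_vs.span (dlin ` ?E \<union> ?K)"
    unfolding dlin_span[of "block m p \<union> block m (\<not> p)"]
    by (rule ext_vs.span_mono[OF dlin_blocks_subset])
  moreover have "dlin ` ?E \<union> ?K \<subseteq> ext_vs.span (dlin ` block m p \<union> block m p)"
  proof -
    have "dlin ` ?E \<subseteq> ext_vs.span (dlin ` block m p \<union> block m p)"
      unfolding dlin_span by (rule ext_vs.span_mono) blast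
    moreover have "?K \<subseteq> ext_vs.span (dlin ` block m p \<union> block m p)"
      using ext_vs.span_mono[of "block m p" "dlin ` block m p \<union> block m p"] by blast
    ultimately show ?thesis by blast
  qed
  ultimately have "ext_vs.dim (dlin ` ext_vs.span (block m p \<union> block m (\<not> p)))
      \<le> ext_vs.dim (dlin ` ?E \<union> ?K)"
    by (rule ext_vs.dim_mono_finite) (simp add: finite_block)
  also have "\<dots> \<le> ext_vs.dim (dlin ` ?E) + ext_vs.dim ?K"
  proof (rule ext_vs.dim_Un_le)
    show "dlin ` ?E \<subseteq> ext_vs.span (dlin ` block m p)"
      by (simp add: dlin_span)
  qed (auto simp: finite_block)
  also have "\<dots> = ext_vs.dim ?E"
    by (rule ext_to_ext.rank_nullity_span[OF linear_dlin finite_block])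
  also have "\<dots> = card (block_index m p)"
    unfolding block_def by (rule dim_span_ext_mon[OF finite_subsets_by_weight]) simp
  finally show ?thesis .
qed

lemma weight_le_total: "S \<subseteq> {..<n} \<Longrightarrow> (\<Sum>i\<in>S. \<nu> i) \<le> (\<Sum>i<n. \<nu> i)"
  by (rule sum_mono2) auto

lemma dim_image_le_sum_min:
  "ext_vs.dim (dlin ` ext_vs.span (ext_mon ` Pow {..<n}))
     \<le> (\<Sum>m\<le>(\<Sum>i<n. \<nu> i). min (card (block_index m True)) (card (block_index m False)))"
proof -
  let ?M = "{..(\<Sum>i<n. \<nu> i)}" and ?B = "ext_mon ` Pow {..<n}"
  define R where "R m = dlin ` ext_vs.span (block m True \<union> block m False)" for m
  have R_span: "R m \<subseteq> ext_vs.span (dlin ` ?B)" for m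
  proof -
    have "block m True \<union> block m False \<subseteq> ?B"
      by (auto simp: block_def subsets_by_weight_def)
    then show ?thesis
      unfolding R_def dlin_span by (intro ext_vs.span_mono image_mono)
  qed
  have "dlin ` ?B \<subseteq> (\<Union>m\<in>?M. R m)"
  proof
    fix y assume "y \<in> dlin ` ?B"
    then obtain S where S: "S \<subseteq> {..<n}" "y = dlin (ext_mon S)" by auto
    let ?m = "\<Sum>i\<in>S. \<nu> i"
    have "ext_mon S \<in> block ?m True \<union> block ?m False"
      using S(1) by (cases "even (card S)") (auto simp: block_def subsets_by_weight_def)
    then show "y \<in> (\<Union>m\<in>?M. R m)"
      using S weight_le_total[OF S(1)] by (auto simp: R_def intro: ext_vs.span_base)
  qed
  then have "dlin ` ext_vs.span ?B \<subseteq> ext_vs.span (\<Union>m\<in>?M. R m)"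
    unfolding dlin_span by (rule ext_vs.span_mono)
  then have "ext_vs.dim (dlin ` ext_vs.span ?B) \<le> ext_vs.dim (\<Union>m\<in>?M. R m)"
    by (rule ext_vs.dim_mono_finite[where F = "dlin ` ?B"]) (use R_span in auto)
  also have "\<dots> \<le> (\<Sum>m\<in>?M. ext_vs.dim (R m))"
    by (rule ext_vs.dim_UN_le[where F = "dlin ` ?B"]) (use R_span in auto)
  also have "\<dots> \<le> (\<Sum>m\<in>?M. min (card (block_index m True)) (card (block_index m False)))"
  proof (rule sum_mono)
    fix m
    show "ext_vs.dim (R m) \<le> min (card (block_index m True)) (card (block_index m False))"
      using dim_image_block_le[of m True] dim_image_block_le[of m False]
      by (simp add: R_def Un_commute)
  qed
  finally show ?thesis .
qed

lemma two_pow_eq_sum_card_block_index: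
  "2 ^ n = (\<Sum>m\<le>(\<Sum>i<n. \<nu> i). card (block_index m True) + card (block_index m False))"
proof -
  have "(2::nat) ^ n = (\<Sum>S\<in>Pow {..<n}. 1)" by (simp add: card_Pow)
  also have "\<dots> = (\<Sum>m\<le>(\<Sum>i<n. \<nu> i). \<Sum>S\<in>{S\<in>Pow {..<n}. (\<Sum>i\<in>S. \<nu> i) = m}. 1)"
    by (rule sum.group[symmetric]) (auto intro: weight_le_total)
  also have "\<dots> = (\<Sum>m\<le>(\<Sum>i<n. \<nu> i). card (block_index m True) + card (block_index m False))"
  proof (rule sum.cong[OF refl])
    fix m
    have "{S\<in>Pow {..<n}. (\<Sum>i\<in>S. \<nu> i) = m} = block_index m True \<union> block_index m False"
      by (auto simp: subsets_by_weight_def)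
    moreover have "card (block_index m True \<union> block_index m False)
        = card (block_index m True) + card (block_index m False)"
      by (rule card_Un_disjoint) (auto simp: finite_subsets_by_weight subsets_by_weight_def)
    ultimately show "(\<Sum>S\<in>{S\<in>Pow {..<n}. (\<Sum>i\<in>S. \<nu> i) = m}. 1) =
        card (block_index m True) + card (block_index m False)"
      by simp
  qed
  finally show ?thesis .
qed

theorem cohom_dim_ge: "n \<le> cohom_dim n d"
proof -
  let ?V = "ext_vs.span (ext_mon ` Pow {..<n})"
  let ?rank = "ext_vs.dim (dlin ` ?V)" and ?null = "ext_vs.dim {x \<in> ?V. dlin x = 0}"
  let ?M = "{..(\<Sum>i<n. \<nu> i)}"
  define a where "a m = card (block_index m True)" for m
  define b where "b m = card (block_index m False)" for m
  have rank_nullity: "?rank + ?null = 2 ^ n"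
    using ext_to_ext.rank_nullity_span[OF linear_dlin, of "ext_mon ` Pow {..<n}"]
      dim_span_ext_mon[of "Pow {..<n}"]
    by (simp add: card_Pow)
  have rank: "?rank \<le> (\<Sum>m\<in>?M. min (a m) (b m))"
    using dim_image_le_sum_min by (simp add: a_def b_def)
  have "int n < (\<Sum>m\<in>?M. \<bar>int (a m) - int (b m)\<bar>)"
    using card_less_sum_abs_even_odd_diff[of "{..<n}" \<nu>] weight_pos by (simp add: a_def b_def)
  also have "\<dots> = (\<Sum>m\<in>?M. int (a m + b m) - 2 * int (min (a m) (b m)))"
    by (rule sum.cong) auto
  also have "\<dots> = int (\<Sum>m\<in>?M. a m + b m) - 2 * int (\<Sum>m\<in>?M. min (a m) (b m))"
    by (simp only: sum_subtractf of_nat_sum sum_distrib_left)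
  also have "(\<Sum>m\<in>?M. a m + b m) = 2 ^ n"
    using two_pow_eq_sum_card_block_index by (simp add: a_def b_def)
  finally have "int n < 2 ^ n - 2 * int (\<Sum>m\<in>?M. min (a m) (b m))"
    by simp
  then have "int n + 2 * int ?rank < 2 ^ n"
    using rank by linarith
  moreover have "int ?rank + int ?null = 2 ^ n"
    using arg_cong[OF rank_nullity, of int] by simp
  ultimately have "n + ?rank \<le> ?null"
    by linarith
  then show ?thesis
    unfolding cohom_dim_eq by simp
qed

end

theorem mainTheorem2:
  fixes n :: nat and deg :: "nat \<Rightarrow> nat" and d :: "ext \<Rightarrow> ext"
    and c :: "nat \<Rightarrow> rat" and J :: "nat \<Rightarrow> nat set"
  assumes sull: "sullivan_algebra n deg d"
    and odd_deg: "\<forall>i<n. odd (deg i)"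
    and monomial: "\<forall>i<n. J i \<subseteq> {..<n} \<and> d (ext_gen i) = ext_scale (c i) (ext_mon (J i))"
  shows "cohom_dim n d \<ge> n"
proof -
  interpret monomial_sullivan n deg d c J
    using assms by unfold_locales
  obtain \<nu> :: "nat \<Rightarrow> nat" where "\<forall>i<n. \<nu> i \<ge> 1" "\<forall>i<n. c i \<noteq> 0 \<longrightarrow> \<nu> i = (\<Sum>j\<in>J i. \<nu> j)"
    using weights_exist by blast
  then interpret weighted_monomial_sullivan n deg d c J \<nu>
    by unfold_locales simp_all
  show ?thesis by (rule cohom_dim_ge)
qed

end
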